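(* Under the standing assumptions below, for any $0\le n<\infty$, $\mathbf v\in\mathsf P_n$ and ordinal $\kappa$, we have $\mathrm{val}(\mathbf v)>\kappa$ if and only if there exists $x\in\mathcal{X}_{n+1}$ such that $\mathrm{val}(\mathbf v,x,y)\ge\kappa$ for all $y\in\mathcal{Y}_{n+1}$.
   Context: Standing assumptions: $(\mathcal{X}_t)_{t\ge1}$ Polish, $(\mathcal{Y}_t)_{t\ge1}$ countable; game: in round $t$, $\mathrm{P_A}$ plays $x_t\in\mathcal{X}_t$ then $\mathrm{P_L}$ plays $y_t\in\mathcal{Y}_t$; $\mathrm{P_L}$ wins iff the play lies in $\mathsf{W}\subseteq\prod_{t\ge1}(\mathcal{X}_t\times\mathcal{Y}_t)$, where $\mathsf{W}$ is coanalytic and finitely decidable (every element of $\mathsf{W}$ has a finite prefix all of whose continuations lie in $\mathsf{W}$); $\mathrm{P_L}$ has a winning strategy. Definitions: $\mathsf{P}_n=\prod_{t=1}^n(\mathcal{X}_t\times\mathcal{Y}_t)$ ($\mathsf P_0=\{\varnothing\}$), $\mathsf{P}=\bigcup_{n\ge0}\mathsf{P}_n$. A position $\mathbf v\in\mathsf P_n$ is active if some continuation $\mathbf w\in\prod_{t>n}(\mathcal{X}_t\times\mathcal{Y}_t)$ has $(\mathbf v,\mathbf w)\notin\mathsf{W}$; $\mathsf A_n$ is the set of active positions of length $n$, $\mathsf A=\bigcup_n\mathsf A_n$. For $\mathbf v\in\mathsf P_k$, a decision tree of depth $n$ with starting position $\mathbf v$ is $\mathbf t=\{x_{\mathbf y}\in\mathcal{X}_{k+s+1}:\mathbf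 y\in\prod_{r=k+1}^{k+s}\mathcal{Y}_r,\ 0\le s<n\}$ ($\varnothing$ has depth 0); it is active if $(\mathbf v,x_\varnothing,y_{k+1},x_{y_{k+1}},\ldots,x_{y_{k+1},\ldots,y_{k+n-1}},y_{k+n})\in\mathsf A_{k+n}$ for all $(y_{k+1},\ldots,y_{k+n})$. $\mathsf T^{\mathsf A}_{\mathbf v}$: active trees with starting position $\mathbf v$; $\mathbf t'\prec_{\mathbf v}\mathbf t$ iff $\mathbf t$ is $\mathbf t'$ with its leaves removed. For a well-founded relation, rank: $\rho(\mathbf t)=0$ if minimal, else $\sup\{\rho(\mathbf t')+1:\mathbf t'\prec\mathbf t\}$. With symbols $-1<$ all ordinals $<\mathsf\Omega$: $\mathrm{val}(\mathbf v)=-1$ if $\mathbf v\notin\mathsf A$; $=\mathsf\Omega$ if $\mathbf v\in\mathsf A$ and $\prec_{\mathbf v}$ not well-founded; otherwise $=\rho_{\prec_{\mathbf v}}(\varnothing)$. Comparisons with $\mathsf\Omega$ and $-1$ use this extended order. *)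

theory Defs
  imports "HOL-Analysis.Analysis"
begin

definition Polish_space :: "'a topology \<Rightarrow> bool" where
  "Polish_space T \<longleftrightarrow> completely_metrizable_space T \<and> separable_space T"

definition baire_space :: "(nat \<Rightarrow> nat) topology" where
  "baire_space = product_topology (\<lambda>_. discrete_topology (UNIV :: nat set)) UNIV"

definition analytic_in :: "'a topology \<Rightarrow> 'a set \<Rightarrow> bool" where
  "analytic_in S A \<longleftrightarrow> A \<subseteq> topspace S \<and>
     (A = {} \<or> (\<exists>f. continuous_map baire_space S f \<and> f ` topspace baire_space = A))"

definition coanalytic_in :: "'a topology \<Rightarrow> 'a set \<Rightarrow> bool" where
  "coanalytic_in S A \<longleftrightarrow> A \<subseteq> topspace S \<and> analytic_in S (topspace S - A)"

text \<open>Rounds are numbered t = 1, 2, ...; X t and Y t are the move sets of round t.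
  A play is a function p :: nat => 'x * 'y where p i is the pair of moves of round i+1.
  A position of length n is a list of length n whose i-th entry is the moves of round i+1.\<close>

definition plays :: "(nat \<Rightarrow> 'x set) \<Rightarrow> (nat \<Rightarrow> 'y set) \<Rightarrow> (nat \<Rightarrow> 'x \<times> 'y) set" where
  "plays X Y = {p. \<forall>i. p i \<in> X (Suc i) \<times> Y (Suc i)}"

definition play_space :: "(nat \<Rightarrow> 'x topology) \<Rightarrow> (nat \<Rightarrow> 'y set) \<Rightarrow> (nat \<Rightarrow> 'x \<times> 'y) topology" where
  "play_space TX Y = product_topology (\<lambda>i. prod_topology (TX (Suc i)) (discrete_topology (Y (Suc i)))) UNIV"

definition positions :: "(nat \<Rightarrow> 'x set) \<Rightarrow> (nat \<Rightarrow> 'y set) \<Rightarrow> nat \<Rightarrow> ('x \<times> 'y) list set" where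
  "positions X Y n = {v. length v = n \<and> (\<forall>i<n. v ! i \<in> X (Suc i) \<times> Y (Suc i))}"

definition conts :: "(nat \<Rightarrow> 'x set) \<Rightarrow> (nat \<Rightarrow> 'y set) \<Rightarrow> nat \<Rightarrow> (nat \<Rightarrow> 'x \<times> 'y) set" where
  "conts X Y n = {w. \<forall>j. w j \<in> X (n + Suc j) \<times> Y (n + Suc j)}"

definition concat_play :: "('x \<times> 'y) list \<Rightarrow> (nat \<Rightarrow> 'x \<times> 'y) \<Rightarrow> nat \<Rightarrow> 'x \<times> 'y" where
  "concat_play v w = (\<lambda>i. if i < length v then v ! i else w (i - length v))"

definition finitely_decidable :: "(nat \<Rightarrow> 'x set) \<Rightarrow> (nat \<Rightarrow> 'y set) \<Rightarrow> (nat \<Rightarrow> 'x \<times> 'y) set \<Rightarrow> bool" where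
  "finitely_decidable X Y W \<longleftrightarrow>
     (\<forall>p\<in>W. \<exists>n. \<forall>q\<in>plays X Y. (\<forall>i<n. q i = p i) \<longrightarrow> q \<in> W)"

definition learner_strategy :: "(nat \<Rightarrow> 'x set) \<Rightarrow> (nat \<Rightarrow> 'y set) \<Rightarrow> (('x \<times> 'y) list \<Rightarrow> 'x \<Rightarrow> 'y) \<Rightarrow> bool" where
  "learner_strategy X Y \<sigma> \<longleftrightarrow>
     (\<forall>n. \<forall>h\<in>positions X Y n. \<forall>x\<in>X (Suc n). \<sigma> h x \<in> Y (Suc n))"

definition winning_learner_strategy ::
  "(nat \<Rightarrow> 'x set) \<Rightarrow> (nat \<Rightarrow> 'y set) \<Rightarrow> (nat \<Rightarrow> 'x \<times> 'y) set \<Rightarrow> (('x \<times> 'y) list \<Rightarrow> 'x \<Rightarrow> 'y) \<Rightarrow> bool" where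
  "winning_learner_strategy X Y W \<sigma> \<longleftrightarrow> learner_strategy X Y \<sigma> \<and>
     (\<forall>p\<in>plays X Y. (\<forall>i. snd (p i) = \<sigma> (map p [0..<i]) (fst (p i))) \<longrightarrow> p \<in> W)"

definition active :: "(nat \<Rightarrow> 'x set) \<Rightarrow> (nat \<Rightarrow> 'y set) \<Rightarrow> (nat \<Rightarrow> 'x \<times> 'y) set \<Rightarrow> ('x \<times> 'y) list \<Rightarrow> bool" where
  "active X Y W v \<longleftrightarrow> v \<in> positions X Y (length v) \<and>
     (\<exists>w\<in>conts X Y (length v). concat_play v w \<notin> W)"

text \<open>A decision tree is represented by the partial map ys |-> x_ys.\<close>
definition ysegs :: "(nat \<Rightarrow> 'y set) \<Rightarrow> nat \<Rightarrow> nat \<Rightarrow> 'y list set" where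
  "ysegs Y k s = {ys. length ys = s \<and> (\<forall>i<s. ys ! i \<in> Y (k + Suc i))}"

definition dectree :: "(nat \<Rightarrow> 'x set) \<Rightarrow> (nat \<Rightarrow> 'y set) \<Rightarrow> ('x \<times> 'y) list \<Rightarrow> nat \<Rightarrow> ('y list \<Rightarrow> 'x option) \<Rightarrow> bool" where
  "dectree X Y v n t \<longleftrightarrow> dom t = (\<Union>s<n. ysegs Y (length v) s) \<and>
     (\<forall>ys\<in>dom t. the (t ys) \<in> X (length v + Suc (length ys)))"

definition tree_path :: "('x \<times> 'y) list \<Rightarrow> ('y list \<Rightarrow> 'x option) \<Rightarrow> 'y list \<Rightarrow> ('x \<times> 'y) list" where
  "tree_path v t ys = v @ map (\<lambda>i. (the (t (take i ys)), ys ! i)) [0..<length ys]"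

definition active_tree :: "(nat \<Rightarrow> 'x set) \<Rightarrow> (nat \<Rightarrow> 'y set) \<Rightarrow> (nat \<Rightarrow> 'x \<times> 'y) set \<Rightarrow> ('x \<times> 'y) list \<Rightarrow> nat \<Rightarrow> ('y list \<Rightarrow> 'x option) \<Rightarrow> bool" where
  "active_tree X Y W v n t \<longleftrightarrow> dectree X Y v n t \<and>
     (\<forall>ys\<in>ysegs Y (length v) n. active X Y W (tree_path v t ys))"

definition active_trees :: "(nat \<Rightarrow> 'x set) \<Rightarrow> (nat \<Rightarrow> 'y set) \<Rightarrow> (nat \<Rightarrow> 'x \<times> 'y) set \<Rightarrow> ('x \<times> 'y) list \<Rightarrow> ('y list \<Rightarrow> 'x option) set" where
  "active_trees X Y W v = {t. \<exists>n. active_tree X Y W v n t}"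

definition tree_prec :: "(nat \<Rightarrow> 'x set) \<Rightarrow> (nat \<Rightarrow> 'y set) \<Rightarrow> (nat \<Rightarrow> 'x \<times> 'y) set \<Rightarrow> ('x \<times> 'y) list \<Rightarrow> ('y list \<Rightarrow> 'x option) \<Rightarrow> ('y list \<Rightarrow> 'x option) \<Rightarrow> bool" where
  "tree_prec X Y W v t' t \<longleftrightarrow> t' \<in> active_trees X Y W v \<and> t \<in> active_trees X Y W v \<and>
     (\<exists>n. dectree X Y v (Suc n) t' \<and> t = (\<lambda>ys. if length ys < n then t' ys else None))"

text \<open>An ordinal kappa is represented by an element of a well-ordered type; it denotes the order type
  of its initial segment. For a well-founded relation R (R a b meaning a precedes b) with rank
  rho(b) = sup {rho(a)+1 | R a b}, we have rho(b) >= kappa iff for all gamma < kappa there is a with R a b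
  and rho(a) >= gamma; rank_ge is the (by well-foundedness of < unique) solution of this recursion.\<close>
inductive rank_ge :: "('a \<Rightarrow> 'a \<Rightarrow> bool) \<Rightarrow> 'a \<Rightarrow> 'o::wellorder \<Rightarrow> bool" for R where
  "(\<And>\<gamma>. \<gamma> < \<kappa> \<Longrightarrow> \<exists>a. R a b \<and> rank_ge R a \<gamma>) \<Longrightarrow> rank_ge R b \<kappa>"

text \<open>rho(b) > kappa iff rho(a)+1 > kappa for some a with R a b, i.e. rho(a) >= kappa.\<close>
definition rank_gt :: "('a \<Rightarrow> 'a \<Rightarrow> bool) \<Rightarrow> 'a \<Rightarrow> 'o::wellorder \<Rightarrow> bool" where
  "rank_gt R b \<kappa> \<longleftrightarrow> (\<exists>a. R a b \<and> rank_ge R a \<kappa>)"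

text \<open>Comparisons of val(v) in {-1} + Ordinals + {Omega} with an ordinal kappa.\<close>
definition val_gt :: "(nat \<Rightarrow> 'x set) \<Rightarrow> (nat \<Rightarrow> 'y set) \<Rightarrow> (nat \<Rightarrow> 'x \<times> 'y) set \<Rightarrow> ('x \<times> 'y) list \<Rightarrow> 'o::wellorder \<Rightarrow> bool" where
  "val_gt X Y W v \<kappa> \<longleftrightarrow>
     (if \<not> active X Y W v then False
      else if \<not> wfP (tree_prec X Y W v) then True
      else rank_gt (tree_prec X Y W v) Map.empty \<kappa>)"

definition val_ge :: "(nat \<Rightarrow> 'x set) \<Rightarrow> (nat \<Rightarrow> 'y set) \<Rightarrow> (nat \<Rightarrow> 'x \<times> 'y) set \<Rightarrow> ('x \<times> 'y) list \<Rightarrow> 'o::wellorder \<Rightarrow> bool" where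
  "val_ge X Y W v \<kappa> \<longleftrightarrow>
     (if \<not> active X Y W v then False
      else if \<not> wfP (tree_prec X Y W v) then True
      else rank_ge (tree_prec X Y W v) Map.empty \<kappa>)"

end

theory Submission
  imports Defs
begin

(* The condition val(v) > kappa says that some active tree of depth one below v has rank at
   least kappa.  Such a tree is a root move x with an empty subtree at every position
   (v, x, y), and extending a tree by a layer of leaves is the same as extending each of its
   subtrees: the extension order of trees with root x at v is the product, over y, of the
   extension orders at (v, x, y).  Hence ranks split over the children, and a tree has rank
   at least kappa iff every subtree does.  When an extension order is not well-founded, the
   rank condition holds for every kappa, because a descending set of trees can be closed
   under truncation and then contains the empty tree. *)

definition valid_ys :: "(nat \<Rightarrow> 'y set) \<Rightarrow> nat \<Rightarrow> 'y list \<Rightarrow> bool" where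
  "valid_ys Y k ys \<longleftrightarrow> (\<forall>i<length ys. ys ! i \<in> Y (k + Suc i))"

lemma ysegs_iff: "ys \<in> ysegs Y k s \<longleftrightarrow> length ys = s \<and> valid_ys Y k ys"
  by (auto simp: ysegs_def valid_ys_def)

lemma valid_ys_Nil [simp]: "valid_ys Y k []"
  by (simp add: valid_ys_def)

lemma valid_ys_Cons [simp]: "valid_ys Y k (y # ys) \<longleftrightarrow> y \<in> Y (Suc k) \<and> valid_ys Y (Suc k) ys"
  by (auto simp: valid_ys_def less_Suc_eq_0_disj)

lemma valid_ys_append: "valid_ys Y k (ys @ zs) \<longleftrightarrow> valid_ys Y k ys \<and> valid_ys Y (k + length ys) zs"
  by (induction ys arbitrary: k) auto

lemma valid_ys_exists:
  assumes "\<And>i. Y (k + Suc i) \<noteq> {}"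
  obtains ys where "length ys = m" "valid_ys Y k ys"
proof
  show "length (map (\<lambda>i. SOME y. y \<in> Y (k + Suc i)) [0..<m]) = m" by simp
  show "valid_ys Y k (map (\<lambda>i. SOME y. y \<in> Y (k + Suc i)) [0..<m])"
    using assms by (auto simp: valid_ys_def some_in_eq)
qed

definition subtree :: "('y list \<Rightarrow> 'x option) \<Rightarrow> 'y \<Rightarrow> 'y list \<Rightarrow> 'x option" where
  "subtree t y = (\<lambda>ys. t (y # ys))"

definition truncate :: "nat \<Rightarrow> ('y list \<Rightarrow> 'x option) \<Rightarrow> 'y list \<Rightarrow> 'x option" where
  "truncate k t = (\<lambda>ys. if length ys < k then t ys else None)"

definition tree_node :: "(nat \<Rightarrow> 'y set) \<Rightarrow> nat \<Rightarrow> 'x \<Rightarrow> ('y \<Rightarrow> 'y list \<Rightarrow> 'x option) \<Rightarrow> 'y list \<Rightarrow> 'x option" where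
  "tree_node Y k x f = (\<lambda>ys. case ys of [] \<Rightarrow> Some x | y # ys' \<Rightarrow> if y \<in> Y (Suc k) then f y ys' else None)"

lemma tree_node_Nil [simp]: "tree_node Y k x f [] = Some x"
  by (simp add: tree_node_def)

lemma subtree_tree_node [simp]: "y \<in> Y (Suc k) \<Longrightarrow> subtree (tree_node Y k x f) y = f y"
  by (simp add: tree_node_def subtree_def)

lemma truncate_truncate: "k \<le> m \<Longrightarrow> truncate k (truncate m t) = truncate k t"
  by (auto simp: truncate_def)

lemma truncate_0 [simp]: "truncate 0 t = Map.empty"
  by (simp add: truncate_def)

lemma subtree_truncate: "subtree (truncate (Suc d) t) y = truncate d (subtree t y)"
  by (auto simp: subtree_def truncate_def)

lemma tree_path_Nil [simp]: "tree_path v t [] = v"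
  by (simp add: tree_path_def)

lemma tree_path_Cons: "tree_path v t (y # ys) = tree_path (v @ [(the (t []), y)]) (subtree t y) ys"
  unfolding tree_path_def subtree_def by (simp del: upt_Suc add: map_upt_Suc)

lemma length_tree_path [simp]: "length (tree_path v t ys) = length v + length ys"
  by (simp add: tree_path_def)

lemma tree_path_truncate:
  assumes "length ys = k"
  shows "tree_path v (truncate k t) ys = take (length v + k) (tree_path v t (ys @ zs))"
proof -
  let ?step = "\<lambda>i. (the (t (take i (ys @ zs))), (ys @ zs) ! i)"
  have "take k (map ?step [0..<length (ys @ zs)]) = map ?step [0..<k]"
    using assms by (simp add: take_map upt_add_eq_append[of 0 k] del: upt_add_eq_append)
  also have "\<dots> = map (\<lambda>i. (the (truncate k t (take i ys)), ys ! i)) [0..<length ys]"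
    using assms by (auto simp: truncate_def nth_append)
  finally show ?thesis
    unfolding tree_path_def using assms by simp
qed

lemma dectree_iff:
  "dectree X Y v D t \<longleftrightarrow>
     (\<forall>ys. t ys \<noteq> None \<longleftrightarrow> length ys < D \<and> valid_ys Y (length v) ys) \<and>
     (\<forall>ys x. t ys = Some x \<longrightarrow> x \<in> X (length v + Suc (length ys)))"
  unfolding dectree_def by (auto simp: ysegs_iff set_eq_iff) (metis domI option.sel)

lemma active_tree_iff:
  "active_tree X Y W v D t \<longleftrightarrow> dectree X Y v D t \<and>
     (\<forall>ys. length ys = D \<and> valid_ys Y (length v) ys \<longrightarrow> active X Y W (tree_path v t ys))"
  unfolding active_tree_def by (auto simp: ysegs_iff)

lemma dectree_depth_unique:
  assumes "dectree X Y v D t" "dectree X Y v D' t" "\<And>i. Y (length v + Suc i) \<noteq> {}"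
  shows "D = D'"
proof (rule ccontr)
  assume "D \<noteq> D'"
  obtain ys where "length ys = min D D'" "valid_ys Y (length v) ys"
    using valid_ys_exists assms(3) by blast
  then show False
    using assms(1,2) \<open>D \<noteq> D'\<close> unfolding dectree_iff by (metis min.strict_order_iff min_def nat_neq_iff)
qed

lemma dectree_root:
  assumes "dectree X Y v (Suc d) t"
  shows "t [] = Some (the (t []))" "the (t []) \<in> X (Suc (length v))"
proof -
  obtain x where x: "t [] = Some x"
    using assms unfolding dectree_iff by fastforce
  then have "x \<in> X (Suc (length v))"
    using assms unfolding dectree_iff by fastforce
  with x show "t [] = Some (the (t []))" "the (t []) \<in> X (Suc (length v))" by auto
qed

lemma dectree_outside:
  assumes "dectree X Y v D t" "y \<notin> Y (Suc (length v))"
  shows "t (y # ys) = None"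
  using assms unfolding dectree_iff by (meson not_None_eq valid_ys_Cons)

lemma dectree_subtree:
  assumes "dectree X Y v (Suc d) t" "y \<in> Y (Suc (length v))"
  shows "dectree X Y (v @ [p]) d (subtree t y)"
  unfolding dectree_iff subtree_def
proof (intro conjI allI impI)
  fix ys
  show "t (y # ys) \<noteq> None \<longleftrightarrow> length ys < d \<and> valid_ys Y (length (v @ [p])) ys"
    using assms unfolding dectree_iff by auto
next
  fix ys x
  assume "t (y # ys) = Some x"
  then have "x \<in> X (length v + Suc (length (y # ys)))"
    using assms(1) unfolding dectree_iff by blast
  then show "x \<in> X (length (v @ [p]) + Suc (length ys))" by simp
qed

lemma dectree_tree_node:
  assumes "x \<in> X (Suc (length v))"
    and "\<And>y. y \<in> Y (Suc (length v)) \<Longrightarrow> dectree X Y (v @ [p y]) d (f y)"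
  shows "dectree X Y v (Suc d) (tree_node Y (length v) x f)"
  unfolding dectree_iff
proof (intro conjI allI impI)
  fix ys
  show "tree_node Y (length v) x f ys \<noteq> None \<longleftrightarrow> length ys < Suc d \<and> valid_ys Y (length v) ys"
    using assms(2) by (cases ys) (auto simp: tree_node_def dectree_iff)
next
  fix ys x'
  assume "tree_node Y (length v) x f ys = Some x'"
  then show "x' \<in> X (length v + Suc (length ys))"
    using assms by (cases ys) (auto simp: tree_node_def dectree_iff split: if_splits)
qed

lemma truncate_dectree: "dectree X Y v D t \<Longrightarrow> truncate D t = t"
proof
  fix ys
  assume "dectree X Y v D t"
  then have "\<not> length ys < D \<Longrightarrow> t ys = None"
    unfolding dectree_iff by blast
  then show "truncate D t ys = t ys"
    unfolding truncate_def by auto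
qed

lemma active_take:
  assumes "active X Y W p" "j \<le> length p"
  shows "active X Y W (take j p)"
proof -
  obtain w0 where w0: "w0 \<in> conts X Y (length p)" "concat_play p w0 \<notin> W"
    using assms(1) unfolding active_def by auto
  have p: "p \<in> positions X Y (length p)"
    using assms(1) unfolding active_def by auto
  define w where "w = (\<lambda>i. concat_play p w0 (j + i))"
  have "w i \<in> X (j + Suc i) \<times> Y (j + Suc i)" for i
  proof (cases "j + i < length p")
    case True
    then show ?thesis using p unfolding w_def concat_play_def positions_def by auto
  next
    case False
    have "w0 (j + i - length p) \<in> X (length p + Suc (j + i - length p)) \<times> Y (length p + Suc (j + i - length p))"
      using w0(1) unfolding conts_def by blast
    moreover have "length p + Suc (j + i - length p) = j + Suc i"
      using False by auto
    ultimately show ?thesis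
      using False unfolding w_def concat_play_def by auto
  qed
  then have "w \<in> conts X Y (length (take j p))"
    using assms(2) unfolding conts_def by simp
  moreover have "concat_play (take j p) w = concat_play p w0"
    using assms(2) by (auto simp: concat_play_def w_def min_def)
  moreover have "take j p \<in> positions X Y (length (take j p))"
    using p assms(2) by (auto simp: positions_def)
  ultimately show ?thesis
    using w0(2) unfolding active_def by (intro conjI bexI[of _ w]) simp_all
qed

lemma active_moves_nonempty:
  assumes "active X Y W v"
  shows "Y (length v + Suc i) \<noteq> {}"
proof -
  obtain w where "w \<in> conts X Y (length v)"
    using assms unfolding active_def by blast
  then have "w i \<in> X (length v + Suc i) \<times> Y (length v + Suc i)"
    unfolding conts_def by blast
  then show ?thesis by auto
qed

lemma active_tree_0_iff: "active_tree X Y W v 0 t \<longleftrightarrow> t = Map.empty \<and> active X Y W v"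
  by (auto simp: active_tree_iff dectree_iff)

lemma active_tree_truncate:
  assumes t: "active_tree X Y W v D t" and "k \<le> D" and ne: "\<And>i. Y (length v + Suc i) \<noteq> {}"
  shows "active_tree X Y W v k (truncate k t)"
  unfolding active_tree_iff
proof (intro conjI allI impI)
  have d: "dectree X Y v D t"
    using t unfolding active_tree_iff by blast
  show "dectree X Y v k (truncate k t)"
    unfolding dectree_iff
  proof (intro conjI allI impI)
    fix ys
    show "truncate k t ys \<noteq> None \<longleftrightarrow> length ys < k \<and> valid_ys Y (length v) ys"
      using d \<open>k \<le> D\<close> unfolding dectree_iff truncate_def by auto
  next
    fix ys x
    assume "truncate k t ys = Some x"
    then have "t ys = Some x" unfolding truncate_def by (auto split: if_splits)
    then show "x \<in> X (length v + Suc (length ys))"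
      using d unfolding dectree_iff by blast
  qed
next
  fix ys
  assume ys: "length ys = k \<and> valid_ys Y (length v) ys"
  have "Y (length v + k + Suc i) \<noteq> {}" for i
    using ne[of "k + i"] by (simp add: add.assoc)
  then obtain zs where zs: "length zs = D - k" "valid_ys Y (length v + k) zs"
    using valid_ys_exists by blast
  then have "active X Y W (tree_path v t (ys @ zs))"
    using t ys \<open>k \<le> D\<close> unfolding active_tree_iff by (auto simp: valid_ys_append)
  then have "active X Y W (take (length v + k) (tree_path v t (ys @ zs)))"
    by (rule active_take) (use ys in simp)
  then show "active X Y W (tree_path v (truncate k t) ys)"
    using tree_path_truncate ys by metis
qed

(* Nonempty move sets are needed so that the depth of a tree is determined by its domain. *)

lemma tree_prec_iff:
  assumes ne: "\<And>i. Y (length v + Suc i) \<noteq> {}" and t: "active_tree X Y W v D t"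
  shows "tree_prec X Y W v a t \<longleftrightarrow> active_tree X Y W v (Suc D) a \<and> t = truncate D a"
proof
  assume "tree_prec X Y W v a t"
  then obtain m k where m: "active_tree X Y W v m a" and k: "dectree X Y v (Suc k) a"
    and tk: "t = truncate k a"
    unfolding tree_prec_def active_trees_def truncate_def by blast
  have "m = Suc k"
    using dectree_depth_unique[of X Y v m a "Suc k"] ne k m unfolding active_tree_def by blast
  then have "active_tree X Y W v k t"
    using active_tree_truncate[OF m _ ne, of k] tk by simp
  then have "k = D"
    using dectree_depth_unique[of X Y v k t D] ne t unfolding active_tree_def by blast
  then show "active_tree X Y W v (Suc D) a \<and> t = truncate D a"
    using m \<open>m = Suc k\<close> tk by simp
next
  assume "active_tree X Y W v (Suc D) a \<and> t = truncate D a"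
  then show "tree_prec X Y W v a t"
    using t unfolding tree_prec_def active_trees_def truncate_def active_tree_def by blast
qed

lemma active_tree_subtree:
  assumes "active_tree X Y W v (Suc d) t" "y \<in> Y (Suc (length v))"
  shows "active_tree X Y W (v @ [(the (t []), y)]) d (subtree t y)"
  using assms unfolding active_tree_iff by (auto simp: dectree_subtree tree_path_Cons[symmetric])

lemma active_tree_tree_node:
  assumes "x \<in> X (Suc (length v))"
    and "\<And>y. y \<in> Y (Suc (length v)) \<Longrightarrow> active_tree X Y W (v @ [(x, y)]) d (f y)"
  shows "active_tree X Y W v (Suc d) (tree_node Y (length v) x f)"
  unfolding active_tree_iff
proof (intro conjI allI impI)
  show "dectree X Y v (Suc d) (tree_node Y (length v) x f)"
    using assms by (intro dectree_tree_node) (auto simp: active_tree_def)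
next
  fix ys
  assume ys: "length ys = Suc d \<and> valid_ys Y (length v) ys"
  then obtain y ys' where "ys = y # ys'" by (cases ys) auto
  then show "active X Y W (tree_path v (tree_node Y (length v) x f) ys)"
    using ys assms(2)[of y] unfolding active_tree_iff by (auto simp: tree_path_Cons)
qed

lemma rank_ge_iff: "rank_ge R b \<kappa> \<longleftrightarrow> (\<forall>\<gamma><\<kappa>. \<exists>a. R a b \<and> rank_ge R a \<gamma>)"
  by (subst rank_ge.simps) simp

lemma rank_ge_descending_set:
  assumes "z \<in> Q" "\<forall>z\<in>Q. \<exists>y\<in>Q. R y z"
  shows "rank_ge R z \<kappa>"
  using assms(1)
proof (induction \<kappa> arbitrary: z rule: less_induct)
  case (less \<kappa>)
  obtain y where "y \<in> Q" "R y z"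
    using assms(2) less.prems by blast
  then show ?case
    using less.IH by (auto simp: rank_ge_iff[of R z])
qed

lemma truncations_descending:
  assumes ne: "\<And>i. Y (length v + Suc i) \<noteq> {}"
    and Q: "\<forall>z\<in>Q. \<exists>y\<in>Q. tree_prec X Y W v y z"
    and T: "T = {truncate k z | z k d. z \<in> Q \<and> active_tree X Y W v d z \<and> k \<le> d}"
  shows "\<forall>t\<in>T. \<exists>s\<in>T. tree_prec X Y W v s t"
proof
  fix t
  assume "t \<in> T"
  then obtain z k d where z: "t = truncate k z" "z \<in> Q" "active_tree X Y W v d z" "k \<le> d"
    unfolding T by blast
  show "\<exists>s\<in>T. tree_prec X Y W v s t"
  proof (cases "k < d")
    case True
    have t: "active_tree X Y W v k t"
      using active_tree_truncate[OF z(3) _ ne] z(1,4) by auto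
    have "active_tree X Y W v (Suc k) (truncate (Suc k) z)"
      using active_tree_truncate[OF z(3) _ ne] True by auto
    moreover have "t = truncate k (truncate (Suc k) z)"
      using z(1) truncate_truncate[of k "Suc k" z] by simp
    ultimately have "tree_prec X Y W v (truncate (Suc k) z) t"
      using tree_prec_iff[OF ne t] by blast
    moreover have "truncate (Suc k) z \<in> T"
      unfolding T using z(2,3) True Suc_leI by blast
    ultimately show ?thesis by blast
  next
    case False
    then have "k = d"
      using z(4) by simp
    then have "t = z"
      using z(1,3) truncate_dectree unfolding active_tree_def by blast
    then obtain s where s: "tree_prec X Y W v s t" "s \<in> Q"
      using Q z(2) by blast
    then obtain d' where d': "active_tree X Y W v d' s"
      unfolding tree_prec_def active_trees_def by blast
    then have "s = truncate d' s"
      using truncate_dectree unfolding active_tree_def by (metis (no_types))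
    then have "s \<in> T"
      unfolding T using s(2) d' by blast
    then show ?thesis using s by blast
  qed
qed

lemma not_wfP_tree_prec_descending:
  assumes "active X Y W v" "\<not> wfP (tree_prec X Y W v)"
  obtains T where "Map.empty \<in> T" "\<forall>t\<in>T. \<exists>s\<in>T. tree_prec X Y W v s t"
proof -
  note ne = active_moves_nonempty[OF assms(1)]
  obtain Q z where Q: "z \<in> Q" "\<forall>z\<in>Q. \<exists>y. tree_prec X Y W v y z \<and> y \<in> Q"
    using assms(2) unfolding wfp_eq_minimal by blast
  define T where "T = {truncate k z | z k d. z \<in> Q \<and> active_tree X Y W v d z \<and> k \<le> d}"
  obtain d where "active_tree X Y W v d z"
    using Q unfolding tree_prec_def active_trees_def by blast
  then have "truncate 0 z \<in> T"
    unfolding T_def using Q(1) by blast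
  moreover have "\<forall>t\<in>T. \<exists>s\<in>T. tree_prec X Y W v s t"
    using truncations_descending[OF ne _ T_def] Q(2) by blast
  ultimately show ?thesis
    using that by simp
qed

lemma val_ge_iff: "val_ge X Y W v \<kappa> \<longleftrightarrow> active X Y W v \<and> rank_ge (tree_prec X Y W v) Map.empty \<kappa>"
proof (cases "active X Y W v \<and> \<not> wfP (tree_prec X Y W v)")
  case True
  then obtain T where "Map.empty \<in> T" "\<forall>t\<in>T. \<exists>s\<in>T. tree_prec X Y W v s t"
    using not_wfP_tree_prec_descending[of X Y W v] by blast
  then have "rank_ge (tree_prec X Y W v) Map.empty \<kappa>"
    by (rule rank_ge_descending_set)
  with True show ?thesis
    unfolding val_ge_def by (simp only: if_True if_False not_not simp_thms)
next
  case False
  then show ?thesis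
    unfolding val_ge_def by (cases "active X Y W v") (simp_all only: if_True if_False not_not simp_thms)
qed

lemma val_gt_iff: "val_gt X Y W v \<kappa> \<longleftrightarrow> active X Y W v \<and> rank_gt (tree_prec X Y W v) Map.empty \<kappa>"
proof (cases "active X Y W v \<and> \<not> wfP (tree_prec X Y W v)")
  case True
  then obtain T where T: "Map.empty \<in> T" "\<forall>t\<in>T. \<exists>s\<in>T. tree_prec X Y W v s t"
    using not_wfP_tree_prec_descending[of X Y W v] by blast
  then obtain s where "s \<in> T" "tree_prec X Y W v s Map.empty"
    by blast
  then have "rank_gt (tree_prec X Y W v) Map.empty \<kappa>"
    using rank_ge_descending_set[OF _ T(2)] unfolding rank_gt_def by blast
  with True show ?thesis
    unfolding val_gt_def by (simp only: if_True if_False not_not simp_thms)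
next
  case False
  then show ?thesis
    unfolding val_gt_def by (cases "active X Y W v") (simp_all only: if_True if_False not_not simp_thms)
qed

lemma tree_prec_subtree:
  assumes ne: "\<And>i. Y (length v + Suc i) \<noteq> {}" and t: "active_tree X Y W v (Suc d) t"
    and a: "tree_prec X Y W v a t" and y: "y \<in> Y (Suc (length v))"
  shows "tree_prec X Y W (v @ [(the (t []), y)]) (subtree a y) (subtree t y)"
proof -
  let ?v = "v @ [(the (t []), y)]"
  have a': "active_tree X Y W v (Suc (Suc d)) a" and ta: "t = truncate (Suc d) a"
    using tree_prec_iff[OF ne t] a by auto
  have "the (a []) = the (t [])"
    using ta by (simp add: truncate_def)
  then have "active_tree X Y W ?v (Suc d) (subtree a y)"
    using active_tree_subtree[OF a' y] by simp
  moreover have "subtree t y = truncate d (subtree a y)"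
    using ta subtree_truncate by metis
  moreover have "Y (length ?v + Suc i) \<noteq> {}" for i
    using ne[of "Suc i"] by simp
  ultimately show ?thesis
    using tree_prec_iff[of Y ?v, OF _ active_tree_subtree[OF t y]] by blast
qed

lemma tree_prec_tree_node:
  assumes ne: "\<And>i. Y (length v + Suc i) \<noteq> {}" and t: "active_tree X Y W v (Suc d) t"
    and f: "\<And>y. y \<in> Y (Suc (length v)) \<Longrightarrow>
      tree_prec X Y W (v @ [(the (t []), y)]) (f y) (subtree t y)"
  shows "tree_prec X Y W v (tree_node Y (length v) (the (t [])) f) t"
proof -
  let ?x = "the (t [])" and ?a = "tree_node Y (length v) (the (t [])) f"
  have dt: "dectree X Y v (Suc d) t"
    using t unfolding active_tree_def by blast
  have ne': "Y (length (v @ [p]) + Suc i) \<noteq> {}" for p i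
    using ne[of "Suc i"] by simp
  have fy: "active_tree X Y W (v @ [(?x, y)]) (Suc d) (f y) \<and> subtree t y = truncate d (f y)"
    if y: "y \<in> Y (Suc (length v))" for y
    using tree_prec_iff[of Y "v @ [(?x, y)]", OF ne' active_tree_subtree[OF t y]] f[OF y] by blast
  have "active_tree X Y W v (Suc (Suc d)) ?a"
    using active_tree_tree_node[of ?x X v Y W "Suc d" f] dectree_root(2)[OF dt] fy by blast
  moreover have "t ys = truncate (Suc d) ?a ys" for ys
  proof (cases ys)
    case Nil
    then show ?thesis using dectree_root(1)[OF dt] by (simp add: truncate_def)
  next
    case (Cons y ys')
    show ?thesis
    proof (cases "y \<in> Y (Suc (length v))")
      case True
      then have "subtree t y ys' = truncate d (f y) ys'"
        using fy by simp
      then show ?thesis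
        using True Cons by (simp add: subtree_def truncate_def tree_node_def)
    next
      case False
      then show ?thesis
        using Cons dectree_outside[OF dt False] by (simp add: truncate_def tree_node_def)
    qed
  qed
  ultimately show ?thesis
    using tree_prec_iff[OF ne t] by blast
qed

lemma rank_ge_subtree:
  assumes ne: "\<And>i. Y (length v + Suc i) \<noteq> {}"
  shows "active_tree X Y W v (Suc d) t \<Longrightarrow> rank_ge (tree_prec X Y W v) t \<kappa> \<Longrightarrow>
    y \<in> Y (Suc (length v)) \<Longrightarrow>
    rank_ge (tree_prec X Y W (v @ [(the (t []), y)])) (subtree t y) \<kappa>"
proof (induction \<kappa> arbitrary: t d rule: less_induct)
  case (less \<kappa>)
  show ?case
  proof (subst rank_ge_iff, intro allI impI)
    fix \<gamma>
    assume "\<gamma> < \<kappa>"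
    then obtain a where a: "tree_prec X Y W v a t" "rank_ge (tree_prec X Y W v) a \<gamma>"
      using less.prems(2) rank_ge_iff by metis
    have a': "active_tree X Y W v (Suc (Suc d)) a" and "the (a []) = the (t [])"
      using tree_prec_iff[OF ne less.prems(1)] a(1) by (auto simp: truncate_def)
    then show "\<exists>b. tree_prec X Y W (v @ [(the (t []), y)]) b (subtree t y) \<and>
        rank_ge (tree_prec X Y W (v @ [(the (t []), y)])) b \<gamma>"
      using less.IH[OF \<open>\<gamma> < \<kappa>\<close> a' a(2) less.prems(3)]
        tree_prec_subtree[OF ne less.prems(1) a(1) less.prems(3)] by auto
  qed
qed

lemma rank_ge_of_subtrees:
  assumes ne: "\<And>i. Y (length v + Suc i) \<noteq> {}"
  shows "active_tree X Y W v (Suc d) t \<Longrightarrow>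
    (\<And>y. y \<in> Y (Suc (length v)) \<Longrightarrow>
      rank_ge (tree_prec X Y W (v @ [(the (t []), y)])) (subtree t y) \<kappa>) \<Longrightarrow>
    rank_ge (tree_prec X Y W v) t \<kappa>"
proof (induction \<kappa> arbitrary: t d rule: less_induct)
  case (less \<kappa>)
  let ?x = "the (t [])"
  show ?case
  proof (subst rank_ge_iff, intro allI impI)
    fix \<gamma>
    assume "\<gamma> < \<kappa>"
    then have "\<forall>y\<in>Y (Suc (length v)). \<exists>b. tree_prec X Y W (v @ [(?x, y)]) b (subtree t y) \<and>
        rank_ge (tree_prec X Y W (v @ [(?x, y)])) b \<gamma>"
      using less.prems(2) rank_ge_iff by metis
    then obtain f where f: "\<And>y. y \<in> Y (Suc (length v)) \<Longrightarrow>
        tree_prec X Y W (v @ [(?x, y)]) (f y) (subtree t y) \<and>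
        rank_ge (tree_prec X Y W (v @ [(?x, y)])) (f y) \<gamma>"
      by metis
    let ?a = "tree_node Y (length v) ?x f"
    have prec: "tree_prec X Y W v ?a t"
      using tree_prec_tree_node[OF ne less.prems(1)] f by blast
    then have "active_tree X Y W v (Suc (Suc d)) ?a"
      using tree_prec_iff[OF ne less.prems(1)] by blast
    moreover have "rank_ge (tree_prec X Y W (v @ [(the (?a []), y)])) (subtree ?a y) \<gamma>"
      if "y \<in> Y (Suc (length v))" for y
      using f[OF that] that by simp
    ultimately have "rank_ge (tree_prec X Y W v) ?a \<gamma>"
      using less.IH[OF \<open>\<gamma> < \<kappa>\<close>] by blast
    with prec show "\<exists>a. tree_prec X Y W v a t \<and> rank_ge (tree_prec X Y W v) a \<gamma>"
      by blast
  qed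
qed

lemma rank_ge_depth_one_iff:
  assumes v: "active X Y W v" and a: "active_tree X Y W v (Suc 0) a"
  shows "rank_ge (tree_prec X Y W v) a \<kappa> \<longleftrightarrow>
    (\<forall>y\<in>Y (Suc (length v)). val_ge X Y W (v @ [(the (a []), y)]) \<kappa>)"
proof -
  note ne = active_moves_nonempty[OF v]
  have leaf: "subtree a y = Map.empty \<and> active X Y W (v @ [(the (a []), y)])"
    if "y \<in> Y (Suc (length v))" for y
    using active_tree_subtree[OF a that] by (simp add: active_tree_0_iff)
  show ?thesis
  proof
    assume "rank_ge (tree_prec X Y W v) a \<kappa>"
    then show "\<forall>y\<in>Y (Suc (length v)). val_ge X Y W (v @ [(the (a []), y)]) \<kappa>"
      using rank_ge_subtree[OF ne a] leaf by (auto simp: val_ge_iff)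
  next
    assume "\<forall>y\<in>Y (Suc (length v)). val_ge X Y W (v @ [(the (a []), y)]) \<kappa>"
    then show "rank_ge (tree_prec X Y W v) a \<kappa>"
      using rank_ge_of_subtrees[OF ne a] leaf by (auto simp: val_ge_iff)
  qed
qed

lemma val_gt_iff_move:
  assumes v: "active X Y W v"
  shows "val_gt X Y W v \<kappa> \<longleftrightarrow>
    (\<exists>x\<in>X (Suc (length v)). \<forall>y\<in>Y (Suc (length v)). val_ge X Y W (v @ [(x, y)]) \<kappa>)"
proof -
  have empty: "active_tree X Y W v 0 Map.empty"
    using v by (simp add: active_tree_0_iff)
  have "tree_prec X Y W v a Map.empty \<longleftrightarrow> active_tree X Y W v (Suc 0) a" for a
    using tree_prec_iff[OF active_moves_nonempty[OF v] empty] by simp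
  then have "val_gt X Y W v \<kappa> \<longleftrightarrow>
      (\<exists>a. active_tree X Y W v (Suc 0) a \<and> rank_ge (tree_prec X Y W v) a \<kappa>)"
    using v by (simp add: val_gt_iff rank_gt_def)
  also have "\<dots> \<longleftrightarrow>
    (\<exists>x\<in>X (Suc (length v)). \<forall>y\<in>Y (Suc (length v)). val_ge X Y W (v @ [(x, y)]) \<kappa>)"
  proof
    assume "\<exists>a. active_tree X Y W v (Suc 0) a \<and> rank_ge (tree_prec X Y W v) a \<kappa>"
    then obtain a where a: "active_tree X Y W v (Suc 0) a" "rank_ge (tree_prec X Y W v) a \<kappa>"
      by blast
    have "the (a []) \<in> X (Suc (length v))"
      using a(1) dectree_root(2) unfolding active_tree_def by blast
    with a show "\<exists>x\<in>X (Suc (length v)). \<forall>y\<in>Y (Suc (length v)). val_ge X Y W (v @ [(x, y)]) \<kappa>"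
      using rank_ge_depth_one_iff[OF v a(1)] by blast
  next
    assume "\<exists>x\<in>X (Suc (length v)). \<forall>y\<in>Y (Suc (length v)). val_ge X Y W (v @ [(x, y)]) \<kappa>"
    then obtain x where x: "x \<in> X (Suc (length v))"
      and children: "\<forall>y\<in>Y (Suc (length v)). val_ge X Y W (v @ [(x, y)]) \<kappa>"
      by blast
    let ?a = "tree_node Y (length v) x (\<lambda>_. Map.empty)"
    have "active_tree X Y W v (Suc 0) ?a"
      using active_tree_tree_node[of x X v Y W 0, OF x] children
      by (simp add: active_tree_0_iff val_ge_iff)
    moreover have "rank_ge (tree_prec X Y W v) ?a \<kappa>"
      using rank_ge_depth_one_iff[OF v calculation, where \<kappa> = \<kappa>] children by simp
    ultimately show "\<exists>a. active_tree X Y W v (Suc 0) a \<and> rank_ge (tree_prec X Y W v) a \<kappa>"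
      by blast
  qed
  finally show ?thesis .
qed

lemma inactive_no_move:
  assumes "\<not> active X Y W v" "learner_strategy X Y \<sigma>" "v \<in> positions X Y n"
  shows "\<not> (\<exists>x\<in>X (Suc n). \<forall>y\<in>Y (Suc n). val_ge X Y W (v @ [(x, y)]) \<kappa>)"
proof
  assume "\<exists>x\<in>X (Suc n). \<forall>y\<in>Y (Suc n). val_ge X Y W (v @ [(x, y)]) \<kappa>"
  then obtain x where x: "x \<in> X (Suc n)" and children: "\<forall>y\<in>Y (Suc n). val_ge X Y W (v @ [(x, y)]) \<kappa>"
    by blast
  have "\<sigma> v x \<in> Y (Suc n)"
    using assms(2,3) x unfolding learner_strategy_def by blast
  then have "active X Y W (take (length v) (v @ [(x, \<sigma> v x)]))"
    using children by (intro active_take) (simp_all add: val_ge_iff)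
  with assms(1) show False by simp
qed

theorem mainTheorem17:
  fixes TX :: "nat \<Rightarrow> 'x topology" and Y :: "nat \<Rightarrow> 'y set"
    and W :: "(nat \<Rightarrow> 'x \<times> 'y) set"
    and n :: nat and v :: "('x \<times> 'y) list" and \<kappa> :: "'o::wellorder"
  assumes polish: "\<And>t. t \<ge> 1 \<Longrightarrow> Polish_space (TX t)"
    and countY: "\<And>t. t \<ge> 1 \<Longrightarrow> countable (Y t)"
    and coan: "coanalytic_in (play_space TX Y) W"
    and findec: "finitely_decidable (\<lambda>t. topspace (TX t)) Y W"
    and win: "\<exists>\<sigma>. winning_learner_strategy (\<lambda>t. topspace (TX t)) Y W \<sigma>"
    and v: "v \<in> positions (\<lambda>t. topspace (TX t)) Y n"
  shows "val_gt (\<lambda>t. topspace (TX t)) Y W v \<kappa> \<longleftrightarrow>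
    (\<exists>x\<in>topspace (TX (Suc n)). \<forall>y\<in>Y (Suc n).
        val_ge (\<lambda>t. topspace (TX t)) Y W (v @ [(x, y)]) \<kappa>)"
proof -
  let ?X = "\<lambda>t. topspace (TX t)"
  obtain \<sigma> where \<sigma>: "learner_strategy ?X Y \<sigma>"
    using win unfolding winning_learner_strategy_def by blast
  have n: "length v = n"
    using v unfolding positions_def by blast
  show ?thesis
  proof (cases "active ?X Y W v")
    case True
    show ?thesis
      using val_gt_iff_move[OF True] unfolding n .
  next
    case False
    then show ?thesis
      using inactive_no_move[OF False \<sigma> v] by (simp add: val_gt_iff)
  qed
qed

end
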